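(* Let $\phi$ be an even function in $\mathcal{S}$ with $\int_{-\infty}^\infty\phi(x)\,dx=1$. For $k\in\mathbb{N}$ and $c\in\mathbb{R}$ define $\phi_{k,c}(x)=k\phi(k(x-c))$. Then for every $f\in SG(\mathbb{R})$ and every $c\in\mathbb{R}$, $$f(c)=\lim_{k\to\infty}\int_{-\infty}^\infty f(x)\phi_{k,c}(x)\,dx.$$
   Context: A function $f:\mathbb{R}\to\mathbb{C}$ is piecewise continuous if on each bounded subinterval it is continuous except at finitely many points, at which it has finite one-sided limits. $PC_{bj}$ is the set of piecewise continuous $f:\mathbb{R}\to\mathbb{C}$ satisfying $f(x)=\tfrac12\big(f(x+)+f(x-)\big)$ for every $x$. $SG(\mathbb{R})$ is the set of $f\in PC_{bj}$ for which there exist $C>0$, $N\in\mathbb{N}$ with $\int_{-R}^{R}|f|\le C(1+R)^N$ for all $R>0$. $\mathcal{S}$ is the set of infinitely differentiable $\phi:\mathbb{R}\to\mathbb{C}$ with $\lim_{x\to\pm\infty}x^m\phi^{(n)}(x)=0$ for all integers $m,n\ge0$. *)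

theory Defs
  imports "HOL-Analysis.Analysis"
begin

definition piecewise_continuous :: "(real \<Rightarrow> complex) \<Rightarrow> bool" where
  "piecewise_continuous f \<longleftrightarrow>
     (\<forall>a b. \<exists>D. finite D \<and> (\<forall>x\<in>{a..b} - D. isCont f x) \<and>
        (\<forall>x\<in>D. (\<exists>l. (f \<longlongrightarrow> l) (at_left x)) \<and> (\<exists>l. (f \<longlongrightarrow> l) (at_right x))))"

definition PC_bj :: "(real \<Rightarrow> complex) set" where
  "PC_bj = {f. piecewise_continuous f \<and>
     (\<forall>x. f x = (Lim (at_right x) f + Lim (at_left x) f) / 2)}"

definition SG :: "(real \<Rightarrow> complex) set" where
  "SG = {f \<in> PC_bj. \<exists>C::real. \<exists>N::nat. C > 0 \<and>
     (\<forall>R>0. integral {-R..R} (\<lambda>x. norm (f x)) \<le> C * (1 + R) ^ N)}"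

definition vderiv_n :: "nat \<Rightarrow> (real \<Rightarrow> complex) \<Rightarrow> real \<Rightarrow> complex" where
  "vderiv_n n f = ((\<lambda>g x. vector_derivative g (at x)) ^^ n) f"

definition schwartz :: "(real \<Rightarrow> complex) set" where
  "schwartz = {\<phi>. (\<forall>n x. vderiv_n n \<phi> differentiable (at x)) \<and>
     (\<forall>m n. ((\<lambda>x. x ^ m *\<^sub>R vderiv_n n \<phi> x) \<longlongrightarrow> 0) at_top \<and>
            ((\<lambda>x. x ^ m *\<^sub>R vderiv_n n \<phi> x) \<longlongrightarrow> 0) at_bot)}"

end

theory Submission
  imports Defs
begin

(* Write g(y) = (f(c + y) + f(c - y))/2 - f(c). Since phi is even with integral 1,
   the k-th integral equals f(c) + int g(y) k phi(k y) dy. The normalisation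
   f(x) = (f(x+) + f(x-))/2 of PC_bj makes g continuous at 0 with g(0) = 0, and the
   polynomial growth bound of SG makes g integrable against (1 + |y|)^(-M) for large M.
   Split the integral at |y| = delta: near 0 it is at most sup_{|y| < delta} |g| times
   the L1 norm of phi, which does not depend on k; away from 0 the rapid decay of phi
   gives |k phi(k y)| <= C_delta (1 + |y|)^(-M) / k. *)

section \<open>Piecewise continuous functions\<close>

lemma compact_bounded_if_locally_bounded:
  fixes f :: "'a::topological_space \<Rightarrow> 'b::real_normed_vector"
  assumes "compact S" and "\<And>x. x \<in> S \<Longrightarrow> \<exists>B. eventually (\<lambda>y. norm (f y) \<le> B) (nhds x)"
  obtains B where "\<And>y. y \<in> S \<Longrightarrow> norm (f y) \<le> B"
proof -
  have "\<forall>x\<in>S. \<exists>T B. open T \<and> x \<in> T \<and> (\<forall>y\<in>T. norm (f y) \<le> B)"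
    using assms(2) unfolding eventually_nhds by metis
  then obtain T B where T: "\<And>x. x \<in> S \<Longrightarrow> open (T x) \<and> x \<in> T x \<and> (\<forall>y\<in>T x. norm (f y) \<le> B x)"
    by metis
  have "open (T x)" if "x \<in> S" for x using T[OF that] by blast
  moreover have "S \<subseteq> (\<Union>x\<in>S. T x)" using T by blast
  ultimately obtain C where C: "C \<subseteq> S" "finite C" "S \<subseteq> (\<Union>x\<in>C. T x)"
    by (rule compactE_image[OF assms(1)])
  show ?thesis
  proof
    fix y assume "y \<in> S"
    then obtain x where x: "x \<in> C" "y \<in> T x" using C(3) by blast
    then have "norm (f y) \<le> \<bar>B x\<bar>" using T C(1) by force
    also have "\<dots> \<le> (\<Sum>z\<in>C. \<bar>B z\<bar>)" by (rule member_le_sum) (use x C in auto)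
    finally show "norm (f y) \<le> (\<Sum>z\<in>C. \<bar>B z\<bar>)" .
  qed
qed

lemma piecewise_continuous_one_sided_limits:
  assumes "piecewise_continuous f"
  obtains l r where "(f \<longlongrightarrow> l) (at_left x)" and "(f \<longlongrightarrow> r) (at_right x)"
proof -
  obtain D where cont: "\<forall>y\<in>{x..x} - D. isCont f y"
    and lims: "\<forall>y\<in>D. (\<exists>l. (f \<longlongrightarrow> l) (at_left y)) \<and> (\<exists>r. (f \<longlongrightarrow> r) (at_right y))"
    using assms unfolding piecewise_continuous_def by blast
  show ?thesis
  proof (cases "x \<in> D")
    case True
    then show ?thesis using lims that by blast
  next
    case False
    then have "(f \<longlongrightarrow> f x) (at x)" using cont by (simp add: isCont_def)
    then show ?thesis using that filterlim_at_split by blast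
  qed
qed

lemma piecewise_continuous_locally_bounded:
  assumes "piecewise_continuous f"
  shows "\<exists>B. eventually (\<lambda>y. norm (f y) \<le> B) (nhds x)"
proof -
  obtain l r where l: "(f \<longlongrightarrow> l) (at_left x)" and r: "(f \<longlongrightarrow> r) (at_right x)"
    using piecewise_continuous_one_sided_limits[OF assms] .
  define B where "B = max (norm (f x)) (max (norm l) (norm r) + 1)"
  have "eventually (\<lambda>y. norm (f y) < norm l + 1) (at_left x)"
    using tendsto_norm[OF l] by (rule order_tendstoD) simp
  moreover have "eventually (\<lambda>y. norm (f y) < norm r + 1) (at_right x)"
    using tendsto_norm[OF r] by (rule order_tendstoD) simp
  ultimately have "eventually (\<lambda>y. norm (f y) \<le> B) (at x)"
    unfolding eventually_at_split B_def by (auto elim: eventually_mono)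
  then show ?thesis
    unfolding eventually_nhds_conv_at B_def by auto
qed

lemma piecewise_continuous_measurable:
  assumes "piecewise_continuous f"
  shows "f \<in> borel_measurable lebesgue"
proof -
  have "\<forall>n::nat. \<exists>D. finite D \<and> (\<forall>x\<in>{-real n..real n} - D. isCont f x)"
    using assms unfolding piecewise_continuous_def by blast
  then obtain D where D: "\<And>n. finite (D n)" "\<And>n x. x \<in> {-real n..real n} - D n \<Longrightarrow> isCont f x"
    by metis
  define E where "E = (\<Union>n. D n)"
  have "isCont f x" if "x \<notin> E" for x
  proof -
    have "x \<in> {-real (nat \<lceil>\<bar>x\<bar>\<rceil>)..real (nat \<lceil>\<bar>x\<bar>\<rceil>)}" by auto linarith+
    then show ?thesis using D(2) that unfolding E_def by blast
  qed
  then have "continuous_on (UNIV - E) f"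
    by (intro continuous_at_imp_continuous_on) auto
  moreover have null: "E \<in> null_sets lebesgue"
    unfolding E_def using D(1)
    by (intro null_sets_completionI countable_imp_null_set_lborel) (simp add: countable_finite)
  ultimately have "f \<in> borel_measurable (lebesgue_on (UNIV - E))"
    by (intro continuous_imp_measurable_on_sets_lebesgue) auto
  then have "(\<lambda>x. if x \<in> UNIV - E then f x else 0) \<in> borel_measurable lebesgue"
    using null by (intro borel_measurable_if_I) auto
  moreover have "AE x in lebesgue. (if x \<in> UNIV - E then f x else 0) = f x"
    using AE_not_in[OF null] by eventually_elim auto
  ultimately show ?thesis using borel_measurable_AE by blast
qed

lemma piecewise_continuous_absolutely_integrable_on:
  assumes "piecewise_continuous f"
  shows "f absolutely_integrable_on {a..b}"
proof -
  obtain B where B: "\<And>y. y \<in> {a..b} \<Longrightarrow> norm (f y) \<le> B"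
    using compact_bounded_if_locally_bounded[of "{a..b}" f]
      piecewise_continuous_locally_bounded[OF assms] by blast
  show ?thesis
  proof (rule measurable_bounded_by_integrable_imp_absolutely_integrable)
    show "f \<in> borel_measurable (lebesgue_on {a..b})"
      using piecewise_continuous_measurable[OF assms] by (rule measurable_restrict_space1)
  qed (use B in auto)
qed

lemma PC_bj_symmetric_mean_tendsto:
  assumes "f \<in> PC_bj"
  shows "((\<lambda>y. (f (c + y) + f (c - y)) / 2) \<longlongrightarrow> f c) (at 0)"
proof -
  obtain l r where l: "(f \<longlongrightarrow> l) (at_left c)" and r: "(f \<longlongrightarrow> r) (at_right c)"
    using assms piecewise_continuous_one_sided_limits unfolding PC_bj_def by blast
  have fc: "f c = (r + l) / 2"
    using assms tendsto_Lim[OF _ l] tendsto_Lim[OF _ r] unfolding PC_bj_def by simp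
  have plus: "((\<lambda>y. f (c + y)) \<longlongrightarrow> r) (at_right 0)"
    using r unfolding filterlim_at_right_to_0[of f _ c] by (simp add: add.commute)
  have minus: "((\<lambda>y. f (c - y)) \<longlongrightarrow> l) (at_right 0)"
    using l unfolding filterlim_at_left_to_right filterlim_at_right_to_0[of _ _ "-c"]
    by (simp add: add.commute)
  have right: "((\<lambda>y. (f (c + y) + f (c - y)) / 2) \<longlongrightarrow> f c) (at_right 0)"
    unfolding fc by (intro tendsto_intros plus minus) simp
  then have "((\<lambda>y. (f (c + y) + f (c - y)) / 2) \<longlongrightarrow> f c) (at_left 0)"
    unfolding filterlim_at_left_to_right by (simp add: add.commute)
  from this right show ?thesis by (rule filterlim_split_at)
qed

section \<open>Polynomially weighted integrability\<close>

lemma continuous_on_UNIV_borel_measurable_lebesgue: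
  fixes h :: "real \<Rightarrow> 'b::euclidean_space"
  assumes "continuous_on UNIV h"
  shows "h \<in> borel_measurable lebesgue"
  using continuous_imp_measurable_on_sets_lebesgue[OF assms] by (simp add: lebesgue_on_UNIV_eq)

lemma integrable_bound_nonneg:
  fixes f g :: "'a \<Rightarrow> real"
  assumes "integrable M f" and "g \<in> borel_measurable M"
    and "\<And>x. 0 \<le> g x" and "\<And>x. g x \<le> f x"
  shows "integrable M g"
  using assms(1,2)
proof (rule Bochner_Integration.integrable_bound)
  show "AE x in M. norm (g x) \<le> norm (f x)"
    by (intro AE_I2) (metis abs_of_nonneg assms(3,4) order_trans real_norm_def)
qed

lemma sum_inverse_squares_le: "(\<Sum>j<m. 1 / (1 + real j) ^ 2) \<le> 2 - 2 / (real m + 1)"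
proof (induction m)
  case 0
  then show ?case by simp
next
  case (Suc m)
  have "0 \<le> real m * real m" by simp
  then have "1 / (1 + real m) ^ 2 \<le> 2 / ((real m + 1) * (real m + 2))"
    by (simp add: divide_simps power2_eq_square algebra_simps)
  also have "\<dots> = 2 / (real m + 1) - 2 / (real m + 2)"
    by (simp add: field_simps)
  finally show ?case using Suc by (simp add: add.commute)
qed

lemma inverse_power_le_sum_indicators:
  fixes x :: real
  assumes "\<bar>x\<bar> \<le> real n + 1"
  shows "1 / (1 + \<bar>x\<bar>) ^ M \<le> (\<Sum>j\<le>n. indicator {-(real j + 1)..real j + 1} x / (1 + real j) ^ M)"
proof -
  define j where "j = min n (nat \<lfloor>\<bar>x\<bar>\<rfloor>)"
  have j: "real j \<le> \<bar>x\<bar>" "\<bar>x\<bar> \<le> real j + 1" "j \<le> n"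
    using assms unfolding j_def by (auto simp: min_def) linarith+
  then have "1 / (1 + \<bar>x\<bar>) ^ M \<le> indicator {-(real j + 1)..real j + 1} x / (1 + real j) ^ M"
    by (auto simp: indicator_def intro!: divide_left_mono power_mono)
  also have "\<dots> \<le> (\<Sum>j\<le>n. indicator {-(real j + 1)..real j + 1} x / (1 + real j) ^ M)"
    by (rule member_le_sum) (use j in auto)
  finally show ?thesis .
qed

lemma weighted_integrable_on_interval:
  fixes h :: "real \<Rightarrow> real"
  assumes "\<And>x. 0 \<le> h x" and "h integrable_on {a..b}"
  shows "(\<lambda>x. h x / (1 + \<bar>x\<bar>) ^ M) integrable_on {a..b}"
proof -
  have "(\<lambda>x. 1 / (1 + \<bar>x\<bar>) ^ M * h x) absolutely_integrable_on {a..b}"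
  proof (rule absolutely_integrable_bounded_measurable_product_real)
    have "continuous_on {a..b} (\<lambda>x::real. 1 / (1 + \<bar>x\<bar>) ^ M)"
      by (intro continuous_intros) auto
    then show "(\<lambda>x::real. 1 / (1 + \<bar>x\<bar>) ^ M) \<in> borel_measurable (lebesgue_on {a..b})"
      by (intro continuous_imp_measurable_on_sets_lebesgue) auto
    show "bounded ((\<lambda>x::real. 1 / (1 + \<bar>x\<bar>) ^ M) ` {a..b})"
      by (auto simp: bounded_iff intro!: exI[of _ 1])
    show "h absolutely_integrable_on {a..b}"
      using assms by (intro nonnegative_absolutely_integrable_1) auto
  qed auto
  then show ?thesis
    by (simp add: absolutely_integrable_on_def)
qed

lemma weighted_integral_le_sum:
  fixes h :: "real \<Rightarrow> real"
  assumes nonneg: "\<And>x. 0 \<le> h x" and integrable: "\<And>a b. h integrable_on {a..b}"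
  shows "integral {-(real n + 1)..real n + 1} (\<lambda>x. h x / (1 + \<bar>x\<bar>) ^ M)
    \<le> (\<Sum>j\<le>n. integral {-(real j + 1)..real j + 1} h / (1 + real j) ^ M)"
proof -
  define I where "I j = {-(real j + 1)..real j + 1}" for j :: nat
  have nested: "I j \<inter> I n = I j" if "j \<in> {..n}" for j
    using that by (auto simp: I_def)
  have restrict_integrable: "(\<lambda>x. if x \<in> I j then h x else 0) integrable_on I n" if "j \<in> {..n}" for j
  proof -
    have "h integrable_on I j"
      unfolding I_def by (rule integrable)
    then have "h integrable_on I j \<inter> I n"
      using nested[OF that] by simp
    then show ?thesis
      by (simp only: integrable_restrict_Int)
  qed
  have "integral (I n) (\<lambda>x. h x / (1 + \<bar>x\<bar>) ^ M)
      \<le> integral (I n) (\<lambda>x. \<Sum>j\<le>n. (if x \<in> I j then h x else 0) / (1 + real j) ^ M)"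
  proof (rule integral_le)
    show "(\<lambda>x. \<Sum>j\<le>n. (if x \<in> I j then h x else 0) / (1 + real j) ^ M) integrable_on I n"
      using restrict_integrable by (intro integrable_sum integrable_on_divide) auto
    fix x assume "x \<in> I n"
    then have "h x * (1 / (1 + \<bar>x\<bar>) ^ M) \<le> h x * (\<Sum>j\<le>n. indicator (I j) x / (1 + real j) ^ M)"
      using nonneg[of x] inverse_power_le_sum_indicators[of x n M]
      by (intro mult_left_mono) (auto simp: I_def)
    also have "\<dots> = (\<Sum>j\<le>n. (if x \<in> I j then h x else 0) / (1 + real j) ^ M)"
      by (auto simp: sum_distrib_left indicator_def intro!: sum.cong)
    finally show "h x / (1 + \<bar>x\<bar>) ^ M \<le> (\<Sum>j\<le>n. (if x \<in> I j then h x else 0) / (1 + real j) ^ M)"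
      by simp
  qed (use nonneg integrable weighted_integrable_on_interval in \<open>simp add: I_def\<close>)
  also have "\<dots> = (\<Sum>j\<le>n. integral (I n) (\<lambda>x. (if x \<in> I j then h x else 0) / (1 + real j) ^ M))"
    using restrict_integrable by (intro integral_sum) (auto intro: integrable_on_divide)
  also have "\<dots> = (\<Sum>j\<le>n. integral (I j) h / (1 + real j) ^ M)"
    using nested by (intro sum.cong) (simp_all add: integral_restrict_Int)
  finally show ?thesis
    unfolding I_def .
qed

lemma integrable_if_interval_integrals_bounded:
  fixes u :: "real \<Rightarrow> real"
  assumes nonneg: "\<And>x. 0 \<le> u x" and integrable: "\<And>a b. u integrable_on {a..b}"
    and bounded: "\<And>n::nat. integral {-real n..real n} u \<le> B"
  shows "integrable lebesgue u"
proof -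
  define F where "F n x = (if x \<in> {-real n..real n} then u x else 0)" for n :: nat and x
  have F_integrable: "F n integrable_on UNIV" for n
    unfolding F_def integrable_restrict_UNIV by (rule integrable)
  have "u integrable_on UNIV \<and> (\<lambda>n. integral UNIV (F n)) \<longlonglongrightarrow> integral UNIV u"
  proof (rule monotone_convergence_increasing)
    show "F n x \<le> F (Suc n) x" for n x
      using nonneg[of x] by (auto simp: F_def)
    show "(\<lambda>n. F n x) \<longlonglongrightarrow> u x" for x
    proof (rule tendsto_eventually)
      show "eventually (\<lambda>n. F n x = u x) sequentially"
        using eventually_ge_at_top[of "nat \<lceil>\<bar>x\<bar>\<rceil>"]
      proof eventually_elim
        case (elim n)
        then have "\<bar>x\<bar> \<le> real n"
          using real_nat_ceiling_ge[of "\<bar>x\<bar>"] by linarith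
        then show ?case
          by (auto simp: F_def abs_le_iff)
      qed
    qed
    have "integral UNIV (F n) = integral {-real n..real n} u" for n
      unfolding F_def by (rule integral_restrict_UNIV)
    moreover have "0 \<le> integral UNIV (F n)" for n
      using F_integrable nonneg by (intro integral_nonneg) (auto simp: F_def)
    ultimately show "bounded (range (\<lambda>n. integral UNIV (F n)))"
      using bounded by (auto simp: bounded_iff intro!: exI[of _ B])
  qed (rule F_integrable)
  then have "u absolutely_integrable_on UNIV"
    using nonneg by (intro nonnegative_absolutely_integrable_1) auto
  then show ?thesis
    by (simp add: set_integrable_def)
qed

lemma polynomial_growth_weighted_integrable:
  fixes h :: "real \<Rightarrow> real"
  assumes nonneg: "\<And>x. 0 \<le> h x"
    and integrable: "\<And>a b. h integrable_on {a..b}"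
    and growth: "\<And>R. 0 < R \<Longrightarrow> integral {-R..R} h \<le> C * (1 + R) ^ N"
    and "N + 2 \<le> M"
  shows "integrable lebesgue (\<lambda>x. h x / (1 + \<bar>x\<bar>) ^ M)"
proof (rule integrable_if_interval_integrals_bounded)
  show "0 \<le> h x / (1 + \<bar>x\<bar>) ^ M" for x
    using nonneg[of x] by simp
  show "(\<lambda>x. h x / (1 + \<bar>x\<bar>) ^ M) integrable_on {a..b}" for a b
    using nonneg integrable by (rule weighted_integrable_on_interval)
  have "0 \<le> integral {-1..1} h"
    using nonneg integrable by (intro integral_nonneg) auto
  also have "\<dots> \<le> C * 2 ^ N"
    using growth[of 1] by simp
  finally have "0 \<le> C"
    by (metis zero_le_mult_iff not_le zero_less_numeral zero_less_power)
  have term_le: "integral {-(real j + 1)..real j + 1} h / (1 + real j) ^ M \<le> 2 ^ N * C * (1 / (1 + real j) ^ 2)" for j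
  proof -
    have "integral {-(real j + 1)..real j + 1} h / (1 + real j) ^ M \<le> C * (2 + real j) ^ N / (1 + real j) ^ M"
      using growth[of "real j + 1"] by (intro divide_right_mono) (simp_all add: add.commute)
    also have "\<dots> \<le> C * (2 * (1 + real j)) ^ N / (1 + real j) ^ (N + 2)"
      using \<open>0 \<le> C\<close> \<open>N + 2 \<le> M\<close> by (intro frac_le mult_left_mono power_mono power_increasing) auto
    also have "\<dots> = 2 ^ N * C * (1 / (1 + real j) ^ 2)"
      unfolding power_mult_distrib power_add by (simp add: field_simps)
    finally show ?thesis .
  qed
  have "(\<Sum>j<n + 1. 1 / (1 + real j) ^ 2) \<le> 2" for n
    using sum_inverse_squares_le[of "n + 1"] by (smt (verit) divide_nonneg_nonneg of_nat_0_le_iff)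
  fix n :: nat
  have "integral {-real n..real n} (\<lambda>x. h x / (1 + \<bar>x\<bar>) ^ M)
      \<le> integral {-(real n + 1)..real n + 1} (\<lambda>x. h x / (1 + \<bar>x\<bar>) ^ M)"
    using nonneg integrable by (intro integral_subset_le weighted_integrable_on_interval) auto
  also have "\<dots> \<le> (\<Sum>j\<le>n. integral {-(real j + 1)..real j + 1} h / (1 + real j) ^ M)"
    using nonneg integrable by (rule weighted_integral_le_sum)
  also have "\<dots> \<le> 2 ^ N * C * (\<Sum>j<n + 1. 1 / (1 + real j) ^ 2)"
    using term_le by (simp add: sum_distrib_left lessThan_Suc_atMost sum_mono)
  also have "\<dots> \<le> 2 ^ N * C * 2"
    using \<open>(\<Sum>j<n + 1. 1 / (1 + real j) ^ 2) \<le> 2\<close> \<open>0 \<le> C\<close> by (intro mult_left_mono) auto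
  finally show "integral {-real n..real n} (\<lambda>x. h x / (1 + \<bar>x\<bar>) ^ M) \<le> 2 ^ N * C * 2" .
qed

lemma integrable_inverse_power_weight:
  assumes "3 \<le> M"
  shows "integrable lebesgue (\<lambda>x::real. 1 / (1 + \<bar>x\<bar>) ^ M)"
proof (rule polynomial_growth_weighted_integrable[where C = 2 and N = 1])
  show "integral {-R..R} (\<lambda>x. 1) \<le> 2 * (1 + R) ^ 1" if "0 < R" for R :: real
    using that by simp
qed (use assms in auto)

lemma inverse_power_weight_affine_le:
  fixes c \<sigma> y :: real
  shows "1 / (1 + \<bar>y\<bar>) ^ M \<le> (1 + \<bar>c\<bar> + \<bar>\<sigma>\<bar>) ^ M / (1 + \<bar>c + \<sigma> * y\<bar>) ^ M"
proof -
  have "\<bar>c + \<sigma> * y\<bar> \<le> \<bar>c\<bar> + \<bar>\<sigma>\<bar> * \<bar>y\<bar>"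
    using abs_triangle_ineq[of c "\<sigma> * y"] by (simp add: abs_mult)
  moreover have "(1 + \<bar>c\<bar> + \<bar>\<sigma>\<bar>) * (1 + \<bar>y\<bar>) = 1 + \<bar>c\<bar> + \<bar>\<sigma>\<bar> * \<bar>y\<bar> + (\<bar>\<sigma>\<bar> + \<bar>y\<bar> + \<bar>c\<bar> * \<bar>y\<bar>)"
    by (simp add: algebra_simps)
  moreover have "0 \<le> \<bar>\<sigma>\<bar> + \<bar>y\<bar> + \<bar>c\<bar> * \<bar>y\<bar>"
    by simp
  ultimately have "1 + \<bar>c + \<sigma> * y\<bar> \<le> (1 + \<bar>c\<bar> + \<bar>\<sigma>\<bar>) * (1 + \<bar>y\<bar>)"
    by linarith
  then have "(1 + \<bar>c + \<sigma> * y\<bar>) ^ M \<le> (1 + \<bar>c\<bar> + \<bar>\<sigma>\<bar>) ^ M * (1 + \<bar>y\<bar>) ^ M"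
    by (metis power_mono power_mult_distrib abs_ge_zero add_nonneg_nonneg zero_le_one)
  then show ?thesis
    by (simp add: divide_simps mult.commute)
qed

lemma weighted_integrable_affine:
  fixes f :: "real \<Rightarrow> 'b::euclidean_space"
  assumes f_meas: "f \<in> borel_measurable lebesgue"
    and f_weighted: "integrable lebesgue (\<lambda>x. norm (f x) / (1 + \<bar>x\<bar>) ^ M)"
    and "\<sigma> \<noteq> 0"
  shows "integrable lebesgue (\<lambda>y. norm (f (c + \<sigma> * y)) / (1 + \<bar>y\<bar>) ^ M)"
proof (rule integrable_bound_nonneg)
  show "integrable lebesgue (\<lambda>y. (1 + \<bar>c\<bar> + \<bar>\<sigma>\<bar>) ^ M * (norm (f (c + \<sigma> * y)) / (1 + \<bar>c + \<sigma> * y\<bar>) ^ M))"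
    by (rule Bochner_Integration.integrable_mult_right)
      (rule lebesgue_integrable_real_affine[OF f_weighted \<open>\<sigma> \<noteq> 0\<close>])
  have "(\<lambda>y. f (c + \<sigma> *\<^sub>R y)) \<in> borel_measurable lebesgue"
    using f_meas \<open>\<sigma> \<noteq> 0\<close> by (rule borel_measurable_affine)
  then have "(\<lambda>y. f (c + \<sigma> * y)) \<in> borel_measurable lebesgue"
    by simp
  moreover have "continuous_on UNIV (\<lambda>y::real. 1 / (1 + \<bar>y\<bar>) ^ M)"
    by (intro continuous_intros) (auto simp: add_pos_nonneg)
  ultimately show "(\<lambda>y. norm (f (c + \<sigma> * y)) / (1 + \<bar>y\<bar>) ^ M) \<in> borel_measurable lebesgue"
    using continuous_on_UNIV_borel_measurable_lebesgue by measurable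
  show "0 \<le> norm (f (c + \<sigma> * y)) / (1 + \<bar>y\<bar>) ^ M" for y
    by simp
  show "norm (f (c + \<sigma> * y)) / (1 + \<bar>y\<bar>) ^ M
      \<le> (1 + \<bar>c\<bar> + \<bar>\<sigma>\<bar>) ^ M * (norm (f (c + \<sigma> * y)) / (1 + \<bar>c + \<sigma> * y\<bar>) ^ M)" for y
    using mult_left_mono[OF inverse_power_weight_affine_le[where M = M and c = c and \<sigma> = \<sigma> and y = y]
        norm_ge_zero[of "f (c + \<sigma> * y)"]]
    by (simp add: mult_ac)
qed

lemma SG_weighted_integrable:
  assumes "f \<in> SG"
  obtains N where "\<And>M. N \<le> M \<Longrightarrow> integrable lebesgue (\<lambda>x. norm (f x) / (1 + \<bar>x\<bar>) ^ M)"
proof -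
  obtain C N where growth: "\<forall>R>0. integral {-R..R} (\<lambda>x. norm (f x)) \<le> C * (1 + R) ^ N"
    using assms unfolding SG_def by blast
  have "(\<lambda>x. norm (f x)) integrable_on {a..b}" for a b
    using assms piecewise_continuous_absolutely_integrable_on
    unfolding SG_def PC_bj_def absolutely_integrable_on_def by blast
  then have "integrable lebesgue (\<lambda>x. norm (f x) / (1 + \<bar>x\<bar>) ^ M)" if "N + 2 \<le> M" for M
    using growth that by (intro polynomial_growth_weighted_integrable[where C = C and N = N]) auto
  then show ?thesis
    using that by blast
qed

section \<open>Rapidly decreasing kernels\<close>

definition rapidly_decreasing :: "(real \<Rightarrow> 'a::real_normed_vector) \<Rightarrow> bool" where
  "rapidly_decreasing \<phi> \<longleftrightarrow> (\<forall>M. \<exists>A. \<forall>x. norm (\<phi> x) \<le> A / (1 + \<bar>x\<bar>) ^ M)"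

lemma bounded_if_continuous_tendsto_at_infinity:
  fixes u :: "'a::euclidean_space \<Rightarrow> 'b::real_normed_vector"
  assumes "continuous_on UNIV u" and "(u \<longlongrightarrow> l) at_infinity"
  obtains B where "\<And>x. norm (u x) \<le> B"
proof -
  have "eventually (\<lambda>x. dist (u x) l < 1) at_infinity"
    using assms(2) by (rule tendstoD) simp
  then obtain R where R: "\<And>x. R \<le> norm x \<Longrightarrow> dist (u x) l < 1"
    unfolding eventually_at_infinity by blast
  have "compact (u ` cball 0 R)"
    using assms(1) by (intro compact_continuous_image) (auto intro: continuous_on_subset)
  then obtain B where B: "\<And>x. x \<in> cball 0 R \<Longrightarrow> norm (u x) \<le> B"
    by (meson bounded_iff compact_imp_bounded imageI)
  show ?thesis
  proof
    fix x
    show "norm (u x) \<le> max B (norm l + 1)"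
    proof (cases "R \<le> norm x")
      case True
      then show ?thesis using R[of x] norm_triangle_sub[of "u x" l] by (auto simp: dist_norm)
    next
      case False
      then show ?thesis using B[of x] by auto
    qed
  qed
qed

lemma one_plus_abs_power_le:
  fixes x :: real
  shows "(1 + \<bar>x\<bar>) ^ M \<le> 2 ^ M * (1 + \<bar>x\<bar> ^ M)"
proof -
  have "(1 + \<bar>x\<bar>) ^ M \<le> (2 * max 1 \<bar>x\<bar>) ^ M" by (intro power_mono) auto
  also have "\<dots> = 2 ^ M * max 1 \<bar>x\<bar> ^ M" by (simp add: power_mult_distrib)
  also have "\<dots> \<le> 2 ^ M * (1 + \<bar>x\<bar> ^ M)" by (cases "1 \<le> \<bar>x\<bar>") (auto simp: max_def)
  finally show ?thesis .
qed

lemma schwartz_continuous: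
  assumes "\<phi> \<in> schwartz"
  shows "continuous_on UNIV \<phi>"
proof -
  have "vderiv_n 0 \<phi> differentiable (at x)" for x
    using assms unfolding schwartz_def by blast
  then have "\<phi> differentiable (at x)" for x
    by (simp add: vderiv_n_def)
  then show ?thesis
    by (simp add: continuous_at_imp_continuous_on differentiable_imp_continuous_within)
qed

lemma schwartz_rapidly_decreasing:
  assumes "\<phi> \<in> schwartz"
  shows "rapidly_decreasing \<phi>"
  unfolding rapidly_decreasing_def
proof
  fix M
  have moment_lim: "((\<lambda>x. x ^ m *\<^sub>R \<phi> x) \<longlongrightarrow> 0) at_infinity" for m
  proof -
    have "((\<lambda>x. x ^ m *\<^sub>R vderiv_n 0 \<phi> x) \<longlongrightarrow> 0) at_top \<and> ((\<lambda>x. x ^ m *\<^sub>R vderiv_n 0 \<phi> x) \<longlongrightarrow> 0) at_bot"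
      using assms unfolding schwartz_def by blast
    then show ?thesis
      unfolding at_infinity_eq_at_top_bot vderiv_n_def by (auto intro: filterlim_sup)
  qed
  define u where "u x = (1 + \<bar>x\<bar>) ^ M * norm (\<phi> x)" for x
  have "(u \<longlongrightarrow> 0) at_infinity"
  proof (rule Lim_null_comparison)
    show "eventually (\<lambda>x. norm (u x) \<le> 2 ^ M * (norm (x ^ 0 *\<^sub>R \<phi> x) + norm (x ^ M *\<^sub>R \<phi> x))) at_infinity"
    proof (intro always_eventually allI)
      fix x :: real
      have "norm (u x) \<le> 2 ^ M * (1 + \<bar>x\<bar> ^ M) * norm (\<phi> x)"
        unfolding u_def using one_plus_abs_power_le[of x M]
        by (simp add: abs_mult mult_right_mono)
      then show "norm (u x) \<le> 2 ^ M * (norm (x ^ 0 *\<^sub>R \<phi> x) + norm (x ^ M *\<^sub>R \<phi> x))"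
        by (simp add: algebra_simps power_abs)
    qed
    show "((\<lambda>x. 2 ^ M * (norm (x ^ 0 *\<^sub>R \<phi> x) + norm (x ^ M *\<^sub>R \<phi> x))) \<longlongrightarrow> 0) at_infinity"
      using tendsto_mult_right_zero[OF tendsto_add_zero[OF
          tendsto_norm_zero[OF moment_lim[of 0]] tendsto_norm_zero[OF moment_lim[of M]]]] .
  qed
  moreover have "continuous_on UNIV u"
    unfolding u_def using schwartz_continuous[OF assms] by (intro continuous_intros) auto
  ultimately obtain A where A: "\<And>x. norm (u x) \<le> A"
    using bounded_if_continuous_tendsto_at_infinity by blast
  show "\<exists>A. \<forall>x. norm (\<phi> x) \<le> A / (1 + \<bar>x\<bar>) ^ M"
  proof (intro exI allI)
    fix x
    show "norm (\<phi> x) \<le> A / (1 + \<bar>x\<bar>) ^ M"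
      using A[of x] by (simp add: u_def pos_le_divide_eq mult.commute)
  qed
qed

lemma decay_bound_nonneg:
  fixes \<phi> :: "real \<Rightarrow> 'a::real_normed_vector"
  assumes "\<And>s. norm (\<phi> s) \<le> A / (1 + \<bar>s\<bar>) ^ M"
  shows "0 \<le> A"
  using assms[of 0] by (simp add: order_trans[OF norm_ge_zero])

lemma rapidly_decreasing_integrable:
  fixes \<phi> :: "real \<Rightarrow> 'a::euclidean_space"
  assumes "continuous_on UNIV \<phi>" and "rapidly_decreasing \<phi>"
  shows "integrable lebesgue \<phi>"
proof -
  obtain A where A: "\<And>x. norm (\<phi> x) \<le> A / (1 + \<bar>x\<bar>) ^ 3"
    using assms(2) unfolding rapidly_decreasing_def by blast
  then have "0 \<le> A"
    by (rule decay_bound_nonneg)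
  show ?thesis
  proof (rule Bochner_Integration.integrable_bound)
    show "integrable lebesgue (\<lambda>x. A * (1 / (1 + \<bar>x\<bar>) ^ 3))"
      by (rule Bochner_Integration.integrable_mult_right) (rule integrable_inverse_power_weight, simp)
    show "\<phi> \<in> borel_measurable lebesgue"
      using assms(1) by (rule continuous_on_UNIV_borel_measurable_lebesgue)
    show "AE x in lebesgue. norm (\<phi> x) \<le> norm (A * (1 / (1 + \<bar>x\<bar>) ^ 3))"
      using A \<open>0 \<le> A\<close> by simp
  qed
qed

lemma scaled_kernel_norm_le:
  fixes \<phi> :: "real \<Rightarrow> complex"
  assumes decay: "\<And>s. norm (\<phi> s) \<le> A / (1 + \<bar>s\<bar>) ^ M" and "1 \<le> K"
  shows "norm (K * \<phi> (K * y)) \<le> K * A / (1 + \<bar>y\<bar>) ^ M"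
proof -
  have "0 \<le> A" using decay by (rule decay_bound_nonneg)
  have "\<bar>y\<bar> \<le> K * \<bar>y\<bar>"
    using \<open>1 \<le> K\<close> by (simp add: mult_le_cancel_right1)
  then have "(1 + \<bar>y\<bar>) ^ M \<le> (1 + \<bar>K * y\<bar>) ^ M"
    using \<open>1 \<le> K\<close> by (intro power_mono) (auto simp: abs_mult)
  then have "A / (1 + \<bar>K * y\<bar>) ^ M \<le> A / (1 + \<bar>y\<bar>) ^ M"
    using \<open>0 \<le> A\<close> by (intro divide_left_mono) auto
  then have "norm (\<phi> (K * y)) \<le> A / (1 + \<bar>y\<bar>) ^ M"
    using decay order_trans by blast
  then have "K * norm (\<phi> (K * y)) \<le> K * (A / (1 + \<bar>y\<bar>) ^ M)"
    using \<open>1 \<le> K\<close> by (intro mult_left_mono) auto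
  then show ?thesis
    using \<open>1 \<le> K\<close> by (simp add: norm_mult)
qed

lemma scaled_kernel_norm_le_away_from_zero:
  fixes \<phi> :: "real \<Rightarrow> complex"
  assumes decay: "\<And>s. norm (\<phi> s) \<le> A / (1 + \<bar>s\<bar>) ^ (M + 2)"
    and "1 \<le> K" "0 < \<delta>" "\<delta> \<le> 1" "\<delta> \<le> \<bar>y\<bar>"
  shows "norm (K * \<phi> (K * y)) \<le> A * (2 / \<delta>) ^ (M + 2) / (K * (1 + \<bar>y\<bar>) ^ M)"
proof -
  \<comment> \<open>kept abstract so that \<open>divide_simps\<close> below does not unfold the power\<close>
  define Q where "Q = (2 / \<delta>) ^ (M + 2)"
  have "0 \<le> A" using decay by (rule decay_bound_nonneg)
  have "\<delta> * (1 + \<bar>y\<bar>) \<le> 2 * \<bar>y\<bar>"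
    using mult_right_mono[OF \<open>\<delta> \<le> 1\<close> abs_ge_zero[of y]] \<open>\<delta> \<le> \<bar>y\<bar>\<close> by (simp add: algebra_simps)
  then have "K * (\<delta> * (1 + \<bar>y\<bar>)) \<le> K * (2 * \<bar>y\<bar>)"
    using \<open>1 \<le> K\<close> by (intro mult_left_mono) auto
  then have key: "K * (1 + \<bar>y\<bar>) \<le> 2 / \<delta> * (1 + K * \<bar>y\<bar>)"
    using \<open>0 < \<delta>\<close> \<open>1 \<le> K\<close> by (simp add: field_simps)
  have "K * K \<le> K ^ (M + 2)"
    using power_increasing[of 2 "M + 2" K] \<open>1 \<le> K\<close> by (simp add: power2_eq_square)
  then have "K * K * (1 + \<bar>y\<bar>) ^ M \<le> K ^ (M + 2) * (1 + \<bar>y\<bar>) ^ (M + 2)"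
    using \<open>1 \<le> K\<close> by (intro mult_mono power_increasing) auto
  also have "\<dots> = (K * (1 + \<bar>y\<bar>)) ^ (M + 2)"
    by (simp add: power_mult_distrib)
  also have "\<dots> \<le> (2 / \<delta> * (1 + K * \<bar>y\<bar>)) ^ (M + 2)"
    using key \<open>1 \<le> K\<close> by (intro power_mono) auto
  also have "\<dots> = Q * (1 + K * \<bar>y\<bar>) ^ (M + 2)"
    unfolding Q_def by (rule power_mult_distrib)
  finally have "A * (K * K * (1 + \<bar>y\<bar>) ^ M) \<le> A * (Q * (1 + K * \<bar>y\<bar>) ^ (M + 2))"
    using \<open>0 \<le> A\<close> by (rule mult_left_mono)
  moreover have "0 < 1 + K * \<bar>y\<bar>"
    using \<open>1 \<le> K\<close> by (simp add: add_pos_nonneg)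
  then have "0 < (1 + K * \<bar>y\<bar>) ^ (M + 2)"
    by (rule zero_less_power)
  moreover have "0 < (1 + \<bar>y\<bar>) ^ M" "0 < K"
    using \<open>1 \<le> K\<close> by auto
  ultimately have "K * A / (1 + \<bar>K * y\<bar>) ^ (M + 2) \<le> A * Q / (K * (1 + \<bar>y\<bar>) ^ M)"
    by (simp add: abs_mult divide_simps mult_ac)
  moreover have "K * norm (\<phi> (K * y)) \<le> K * (A / (1 + \<bar>K * y\<bar>) ^ (M + 2))"
    using decay[of "K * y"] \<open>1 \<le> K\<close> by (intro mult_left_mono) auto
  then have "norm (K * \<phi> (K * y)) \<le> K * A / (1 + \<bar>K * y\<bar>) ^ (M + 2)"
    using \<open>1 \<le> K\<close> by (simp add: norm_mult)
  ultimately show ?thesis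
    unfolding Q_def by linarith
qed

lemma scaled_kernel_norm_integral:
  fixes \<phi> :: "real \<Rightarrow> complex"
  assumes "integrable lebesgue \<phi>" and "0 < K"
  shows "integrable lebesgue (\<lambda>y. norm (K * \<phi> (K * y)))"
    and "(\<integral>y. norm (K * \<phi> (K * y)) \<partial>lebesgue) = (\<integral>y. norm (\<phi> y) \<partial>lebesgue)"
proof -
  have norm_eq: "norm (K * \<phi> (K * y)) = K * norm (\<phi> (0 + K * y))" for y
    using \<open>0 < K\<close> by (simp add: norm_mult)
  have "integrable lebesgue (\<lambda>y. norm (\<phi> y))"
    using assms(1) by simp
  then show "integrable lebesgue (\<lambda>y. norm (K * \<phi> (K * y)))"
    unfolding norm_eq using \<open>0 < K\<close>
    by (intro Bochner_Integration.integrable_mult_right lebesgue_integrable_real_affine) auto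
  show "(\<integral>y. norm (K * \<phi> (K * y)) \<partial>lebesgue) = (\<integral>y. norm (\<phi> y) \<partial>lebesgue)"
    unfolding norm_eq using lebesgue_integral_real_affine[of K "\<lambda>y. norm (\<phi> y)" 0] \<open>0 < K\<close>
    by simp
qed

lemma scaled_kernel_integrable:
  fixes g \<phi> :: "real \<Rightarrow> complex"
  assumes g_meas: "g \<in> borel_measurable lebesgue"
    and g_weighted: "integrable lebesgue (\<lambda>y. norm (g y) / (1 + \<bar>y\<bar>) ^ M)"
    and \<phi>_cont: "continuous_on UNIV \<phi>"
    and decay: "\<And>s. norm (\<phi> s) \<le> A / (1 + \<bar>s\<bar>) ^ M"
    and "1 \<le> K"
  shows "integrable lebesgue (\<lambda>y. g y * (K * \<phi> (K * y)))"
proof (rule Bochner_Integration.integrable_bound)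
  show "integrable lebesgue (\<lambda>y. K * A * (norm (g y) / (1 + \<bar>y\<bar>) ^ M))"
    by (intro Bochner_Integration.integrable_mult_right g_weighted)
  have "continuous_on UNIV (\<lambda>y. K * \<phi> (K * y))"
    by (intro continuous_intros continuous_on_compose2[OF \<phi>_cont]) auto
  then show "(\<lambda>y. g y * (K * \<phi> (K * y))) \<in> borel_measurable lebesgue"
    using g_meas continuous_on_UNIV_borel_measurable_lebesgue by measurable
  have "0 \<le> A" using decay by (rule decay_bound_nonneg)
  show "AE y in lebesgue. norm (g y * (K * \<phi> (K * y))) \<le> norm (K * A * (norm (g y) / (1 + \<bar>y\<bar>) ^ M))"
  proof (rule AE_I2)
    fix y
    have "norm (g y * (K * \<phi> (K * y))) \<le> norm (g y) * (K * A / (1 + \<bar>y\<bar>) ^ M)"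
      unfolding norm_mult[of "g y"]
      by (intro mult_left_mono scaled_kernel_norm_le[OF decay \<open>1 \<le> K\<close>]) auto
    then show "norm (g y * (K * \<phi> (K * y))) \<le> norm (K * A * (norm (g y) / (1 + \<bar>y\<bar>) ^ M))"
      using \<open>1 \<le> K\<close> \<open>0 \<le> A\<close> by (simp add: abs_mult mult_ac)
  qed
qed

lemma scaled_kernel_split_bound:
  fixes g \<phi> :: "real \<Rightarrow> complex"
  assumes decay: "\<And>s. norm (\<phi> s) \<le> A / (1 + \<bar>s\<bar>) ^ (M + 2)"
    and near: "\<And>y. \<bar>y\<bar> < \<delta> \<Longrightarrow> norm (g y) \<le> \<epsilon>"
    and "0 \<le> \<epsilon>" "0 < \<delta>" "\<delta> \<le> 1" "1 \<le> K"
  shows "norm (g y * (K * \<phi> (K * y)))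
    \<le> \<epsilon> * norm (K * \<phi> (K * y)) + A * (2 / \<delta>) ^ (M + 2) / K * (norm (g y) / (1 + \<bar>y\<bar>) ^ M)"
proof (cases "\<bar>y\<bar> < \<delta>")
  case True
  then have "norm (g y * (K * \<phi> (K * y))) \<le> \<epsilon> * norm (K * \<phi> (K * y))"
    using near[of y] by (simp add: norm_mult mult_right_mono)
  moreover have "0 \<le> A * (2 / \<delta>) ^ (M + 2) / K * (norm (g y) / (1 + \<bar>y\<bar>) ^ M)"
    using decay_bound_nonneg[OF decay] \<open>0 < \<delta>\<close> \<open>1 \<le> K\<close>
    by (intro mult_nonneg_nonneg divide_nonneg_nonneg zero_le_power) auto
  ultimately show ?thesis
    by linarith
next
  case False
  then have "norm (K * \<phi> (K * y)) \<le> A * (2 / \<delta>) ^ (M + 2) / (K * (1 + \<bar>y\<bar>) ^ M)"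
    using assms(4-6) by (intro scaled_kernel_norm_le_away_from_zero[OF decay]) auto
  then have "norm (g y) * norm (K * \<phi> (K * y))
      \<le> norm (g y) * (A * (2 / \<delta>) ^ (M + 2) / (K * (1 + \<bar>y\<bar>) ^ M))"
    by (rule mult_left_mono) simp
  then have "norm (g y * (K * \<phi> (K * y))) \<le> A * (2 / \<delta>) ^ (M + 2) / K * (norm (g y) / (1 + \<bar>y\<bar>) ^ M)"
    unfolding norm_mult[of "g y"] by (simp add: mult_ac)
  moreover have "0 \<le> \<epsilon> * norm (K * \<phi> (K * y))"
    using \<open>0 \<le> \<epsilon>\<close> by simp
  ultimately show ?thesis
    by linarith
qed

lemma scaled_kernel_integral_norm_le:
  fixes g \<phi> :: "real \<Rightarrow> complex"
  assumes g_meas: "g \<in> borel_measurable lebesgue"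
    and g_weighted: "integrable lebesgue (\<lambda>y. norm (g y) / (1 + \<bar>y\<bar>) ^ M)"
    and \<phi>_cont: "continuous_on UNIV \<phi>" and \<phi>_int: "integrable lebesgue \<phi>"
    and decay: "\<And>s. norm (\<phi> s) \<le> A / (1 + \<bar>s\<bar>) ^ (M + 2)"
    and near: "\<And>y. \<bar>y\<bar> < \<delta> \<Longrightarrow> norm (g y) \<le> \<epsilon>"
    and "0 \<le> \<epsilon>" "0 < \<delta>" "\<delta> \<le> 1" "1 \<le> K"
  shows "norm (\<integral>y. g y * (K * \<phi> (K * y)) \<partial>lebesgue)
    \<le> \<epsilon> * (\<integral>y. norm (\<phi> y) \<partial>lebesgue)
      + A * (2 / \<delta>) ^ (M + 2) / K * (\<integral>y. norm (g y) / (1 + \<bar>y\<bar>) ^ M \<partial>lebesgue)"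
proof -
  define B where "B = A * (2 / \<delta>) ^ (M + 2)"
  have "0 \<le> A"
    using decay by (rule decay_bound_nonneg)
  have decay_M: "norm (\<phi> s) \<le> A / (1 + \<bar>s\<bar>) ^ M" for s
  proof -
    have "A / (1 + \<bar>s\<bar>) ^ (M + 2) \<le> A / (1 + \<bar>s\<bar>) ^ M"
      using \<open>0 \<le> A\<close> by (intro divide_left_mono power_increasing mult_pos_pos) auto
    then show ?thesis
      using decay[of s] by linarith
  qed
  have kernel_norm_int: "integrable lebesgue (\<lambda>y. norm (K * \<phi> (K * y)))"
    using scaled_kernel_norm_integral(1)[OF \<phi>_int] \<open>1 \<le> K\<close> by simp
  have "norm (\<integral>y. g y * (K * \<phi> (K * y)) \<partial>lebesgue)
      \<le> (\<integral>y. \<epsilon> * norm (K * \<phi> (K * y)) + B / K * (norm (g y) / (1 + \<bar>y\<bar>) ^ M) \<partial>lebesgue)"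
  proof (rule Bochner_Integration.integral_norm_bound_integral)
    show "integrable lebesgue (\<lambda>y. g y * (K * \<phi> (K * y)))"
      using g_meas g_weighted \<phi>_cont decay_M \<open>1 \<le> K\<close> by (rule scaled_kernel_integrable)
    show "integrable lebesgue (\<lambda>y. \<epsilon> * norm (K * \<phi> (K * y)) + B / K * (norm (g y) / (1 + \<bar>y\<bar>) ^ M))"
      using kernel_norm_int g_weighted
      by (intro Bochner_Integration.integrable_add Bochner_Integration.integrable_mult_right)
    show "norm (g y * (K * \<phi> (K * y))) \<le> \<epsilon> * norm (K * \<phi> (K * y)) + B / K * (norm (g y) / (1 + \<bar>y\<bar>) ^ M)" for y
      unfolding B_def using decay near assms(7-10) by (rule scaled_kernel_split_bound)
  qed
  also have "\<dots> = (\<integral>y. \<epsilon> * norm (K * \<phi> (K * y)) \<partial>lebesgue)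
      + (\<integral>y. B / K * (norm (g y) / (1 + \<bar>y\<bar>) ^ M) \<partial>lebesgue)"
    using kernel_norm_int g_weighted
    by (intro Bochner_Integration.integral_add Bochner_Integration.integrable_mult_right)
  also have "\<dots> = \<epsilon> * (\<integral>y. norm (\<phi> y) \<partial>lebesgue) + B / K * (\<integral>y. norm (g y) / (1 + \<bar>y\<bar>) ^ M \<partial>lebesgue)"
    using scaled_kernel_norm_integral(2)[OF \<phi>_int, of K] \<open>1 \<le> K\<close>
    by (simp only: integral_mult_right_zero)
  finally show ?thesis
    unfolding B_def .
qed

lemma scaled_kernel_integral_tendsto_zero:
  fixes g \<phi> :: "real \<Rightarrow> complex"
  assumes g_meas: "g \<in> borel_measurable lebesgue"
    and g_weighted: "integrable lebesgue (\<lambda>y. norm (g y) / (1 + \<bar>y\<bar>) ^ M)"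
    and g_cont: "isCont g 0" and g_zero: "g 0 = 0"
    and \<phi>_cont: "continuous_on UNIV \<phi>" and \<phi>_decr: "rapidly_decreasing \<phi>"
  shows "(\<lambda>k::nat. \<integral>y. g y * (of_nat k * \<phi> (of_nat k * y)) \<partial>lebesgue) \<longlonglongrightarrow> 0"
proof (rule LIMSEQ_I)
  fix r :: real assume "0 < r"
  obtain A where decay: "\<And>s. norm (\<phi> s) \<le> A / (1 + \<bar>s\<bar>) ^ (M + 2)"
    using \<phi>_decr unfolding rapidly_decreasing_def by blast
  define P where "P = (\<integral>y. norm (\<phi> y) \<partial>lebesgue)"
  define G where "G = (\<integral>y. norm (g y) / (1 + \<bar>y\<bar>) ^ M \<partial>lebesgue)"
  define \<epsilon> where "\<epsilon> = r / (2 * (P + 1))"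
  have "0 \<le> P" "0 \<le> G"
    unfolding P_def G_def by (auto intro: Bochner_Integration.integral_nonneg)
  then have "0 < \<epsilon>" and \<epsilon>_P: "\<epsilon> * (P + 1) = r / 2"
    unfolding \<epsilon>_def using \<open>0 < r\<close> by (simp_all add: field_simps)
  obtain \<delta> where "0 < \<delta>" "\<delta> \<le> 1" and near: "\<And>y. \<bar>y\<bar> < \<delta> \<Longrightarrow> norm (g y) \<le> \<epsilon>"
  proof -
    obtain d where "0 < d" and d: "\<And>y. dist y 0 < d \<Longrightarrow> dist (g y) (g 0) < \<epsilon>"
      using g_cont \<open>0 < \<epsilon>\<close> unfolding continuous_at_eps_delta by blast
    show ?thesis
      using that[of "min d 1"] d g_zero \<open>0 < d\<close> by (auto simp: dist_real_def less_imp_le)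
  qed
  define B where "B = A * (2 / \<delta>) ^ (M + 2)"
  obtain k0 :: nat where k0: "B * G / \<epsilon> < k0"
    using reals_Archimedean2 by blast
  show "\<exists>no. \<forall>k\<ge>no. norm ((\<integral>y. g y * (of_nat k * \<phi> (of_nat k * y)) \<partial>lebesgue) - 0) < r"
  proof (intro exI allI impI)
    fix k :: nat assume "max 1 k0 \<le> k"
    then have "1 \<le> real k" "B * G / \<epsilon> < real k"
      using k0 by auto
    have "norm (\<integral>y. g y * (of_nat k * \<phi> (of_nat k * y)) \<partial>lebesgue) \<le> \<epsilon> * P + B / real k * G"
      using scaled_kernel_integral_norm_le[OF g_meas g_weighted \<phi>_cont
          rapidly_decreasing_integrable[OF \<phi>_cont \<phi>_decr] decay near
          less_imp_le[OF \<open>0 < \<epsilon>\<close>] \<open>0 < \<delta>\<close> \<open>\<delta> \<le> 1\<close> \<open>1 \<le> real k\<close>]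
      unfolding P_def G_def B_def by simp
    also have "B / real k * G < \<epsilon>"
      using \<open>B * G / \<epsilon> < real k\<close> \<open>0 < \<epsilon>\<close> \<open>1 \<le> real k\<close> by (simp add: field_simps)
    finally show "norm ((\<integral>y. g y * (of_nat k * \<phi> (of_nat k * y)) \<partial>lebesgue) - 0) < r"
      using \<epsilon>_P \<open>0 < r\<close> by (simp add: algebra_simps)
  qed
qed

section \<open>Even kernels as approximate identities\<close>

lemma even_kernel_integral_eq:
  fixes f \<phi> :: "real \<Rightarrow> complex" and K :: real
  assumes even: "\<And>x. \<phi> (- x) = \<phi> x"
    and \<phi>_int: "integrable lebesgue \<phi>" and \<phi>_one: "(\<integral>x. \<phi> x \<partial>lebesgue) = 1"
    and "0 < K"
    and plus_int: "integrable lebesgue (\<lambda>y. f (c + y) * (K * \<phi> (K * y)))"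
    and minus_int: "integrable lebesgue (\<lambda>y. f (c - y) * (K * \<phi> (K * y)))"
  shows "integral UNIV (\<lambda>x. f x * (K * \<phi> (K * (x - c))))
       = f c + (\<integral>y. ((f (c + y) + f (c - y)) / 2 - f c) * (K * \<phi> (K * y)) \<partial>lebesgue)"
proof -
  define \<psi> where "\<psi> y = K * \<phi> (K * y)" for y
  define \<Psi> where "\<Psi> x = f x * \<psi> (x - c)" for x
  have \<psi>_int: "integrable lebesgue \<psi>"
    unfolding \<psi>_def using lebesgue_integrable_real_affine[OF \<phi>_int, of K 0] \<open>0 < K\<close>
    by (intro Bochner_Integration.integrable_mult_right) simp
  have "(\<integral>x. \<phi> x \<partial>lebesgue) = \<bar>K\<bar> *\<^sub>R (\<integral>y. \<phi> (0 + K * y) \<partial>lebesgue)"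
    using \<open>0 < K\<close> by (intro lebesgue_integral_real_affine) simp
  then have \<psi>_one: "(\<integral>y. \<psi> y \<partial>lebesgue) = 1"
    unfolding \<psi>_def using \<phi>_one \<open>0 < K\<close> by (simp add: scaleR_conv_of_real)
  have \<Psi>_int: "integrable lebesgue \<Psi>"
    using lebesgue_integrable_real_affine[OF plus_int, of 1 "- c"]
    unfolding \<Psi>_def \<psi>_def by simp
  have plus: "(\<integral>x. \<Psi> x \<partial>lebesgue) = (\<integral>y. f (c + y) * \<psi> y \<partial>lebesgue)"
    using lebesgue_integral_real_affine[of 1 \<Psi> c] unfolding \<Psi>_def by simp
  have "(\<integral>x. \<Psi> x \<partial>lebesgue) = (\<integral>y. \<Psi> (c + (- 1) * y) \<partial>lebesgue)"
    using lebesgue_integral_real_affine[of "- 1" \<Psi> c] by simp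
  also have "(\<lambda>y. \<Psi> (c + (- 1) * y)) = (\<lambda>y. f (c - y) * \<psi> y)"
    unfolding \<Psi>_def \<psi>_def using even by (simp add: mult.commute[of K])
  finally have minus: "(\<integral>x. \<Psi> x \<partial>lebesgue) = (\<integral>y. f (c - y) * \<psi> y \<partial>lebesgue)" .
  have plus_\<psi>: "integrable lebesgue (\<lambda>y. f (c + y) * \<psi> y)"
    and minus_\<psi>: "integrable lebesgue (\<lambda>y. f (c - y) * \<psi> y)"
    using plus_int minus_int unfolding \<psi>_def .
  have "(\<lambda>y. ((f (c + y) + f (c - y)) / 2 - f c) * \<psi> y)
      = (\<lambda>y. 1 / 2 * (f (c + y) * \<psi> y) + 1 / 2 * (f (c - y) * \<psi> y) - f c * \<psi> y)"
    by (auto simp: algebra_simps)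
  then have "(\<integral>y. ((f (c + y) + f (c - y)) / 2 - f c) * \<psi> y \<partial>lebesgue)
      = 1 / 2 * (\<integral>y. f (c + y) * \<psi> y \<partial>lebesgue) + 1 / 2 * (\<integral>y. f (c - y) * \<psi> y \<partial>lebesgue)
        - f c * (\<integral>y. \<psi> y \<partial>lebesgue)"
    using plus_\<psi> minus_\<psi> \<psi>_int
    by (simp add: Bochner_Integration.integral_diff Bochner_Integration.integral_add)
  also have "\<dots> = integral UNIV \<Psi> - f c"
    using plus minus \<psi>_one integral_lebesgue[OF \<Psi>_int] by simp
  finally show ?thesis
    unfolding \<Psi>_def \<psi>_def by simp
qed

lemma symmetric_deviation_weighted_integrable:
  fixes f :: "real \<Rightarrow> complex"
  assumes meas: "(\<lambda>y. (f (c + y) + f (c - y)) / 2 - f c) \<in> borel_measurable lebesgue"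
    and plus: "integrable lebesgue (\<lambda>y. norm (f (c + y)) / (1 + \<bar>y\<bar>) ^ M)"
    and minus: "integrable lebesgue (\<lambda>y. norm (f (c - y)) / (1 + \<bar>y\<bar>) ^ M)"
    and "3 \<le> M"
  shows "integrable lebesgue (\<lambda>y. norm ((f (c + y) + f (c - y)) / 2 - f c) / (1 + \<bar>y\<bar>) ^ M)"
proof (rule integrable_bound_nonneg)
  show "integrable lebesgue (\<lambda>y. norm (f (c + y)) / (1 + \<bar>y\<bar>) ^ M
      + norm (f (c - y)) / (1 + \<bar>y\<bar>) ^ M + norm (f c) * (1 / (1 + \<bar>y\<bar>) ^ M))"
    by (intro Bochner_Integration.integrable_add Bochner_Integration.integrable_mult_right
        plus minus integrable_inverse_power_weight \<open>3 \<le> M\<close>)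
  have "continuous_on UNIV (\<lambda>y::real. 1 / (1 + \<bar>y\<bar>) ^ M)"
    by (intro continuous_intros) (auto simp: add_pos_nonneg)
  then show "(\<lambda>y. norm ((f (c + y) + f (c - y)) / 2 - f c) / (1 + \<bar>y\<bar>) ^ M) \<in> borel_measurable lebesgue"
    using meas continuous_on_UNIV_borel_measurable_lebesgue by measurable
  show "0 \<le> norm ((f (c + y) + f (c - y)) / 2 - f c) / (1 + \<bar>y\<bar>) ^ M" for y
    by simp
  fix y
  have "norm ((f (c + y) + f (c - y)) / 2 - f c) \<le> norm ((f (c + y) + f (c - y)) / 2) + norm (f c)"
    by (rule norm_triangle_ineq4)
  also have "norm ((f (c + y) + f (c - y)) / 2) \<le> norm (f (c + y) + f (c - y))"
    by simp
  also have "\<dots> \<le> norm (f (c + y)) + norm (f (c - y))"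
    by (rule norm_triangle_ineq)
  finally have "norm ((f (c + y) + f (c - y)) / 2 - f c) / (1 + \<bar>y\<bar>) ^ M
      \<le> (norm (f (c + y)) + norm (f (c - y)) + norm (f c)) / (1 + \<bar>y\<bar>) ^ M"
    by (intro divide_right_mono) simp_all
  then show "norm ((f (c + y) + f (c - y)) / 2 - f c) / (1 + \<bar>y\<bar>) ^ M
      \<le> norm (f (c + y)) / (1 + \<bar>y\<bar>) ^ M + norm (f (c - y)) / (1 + \<bar>y\<bar>) ^ M
        + norm (f c) * (1 / (1 + \<bar>y\<bar>) ^ M)"
    by (simp add: add_divide_distrib)
qed

lemma even_kernel_approximate_identity:
  fixes f \<phi> :: "real \<Rightarrow> complex"
  assumes f_meas: "f \<in> borel_measurable lebesgue"
    and f_weighted: "integrable lebesgue (\<lambda>x. norm (f x) / (1 + \<bar>x\<bar>) ^ M)" and "3 \<le> M"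
    and f_sym: "((\<lambda>y. (f (c + y) + f (c - y)) / 2) \<longlongrightarrow> f c) (at 0)"
    and \<phi>_cont: "continuous_on UNIV \<phi>" and \<phi>_decr: "rapidly_decreasing \<phi>"
    and even: "\<And>x. \<phi> (- x) = \<phi> x" and \<phi>_one: "(\<integral>x. \<phi> x \<partial>lebesgue) = 1"
  shows "(\<lambda>k::nat. integral UNIV (\<lambda>x. f x * (of_nat k * \<phi> (of_nat k * (x - c))))) \<longlonglongrightarrow> f c"
proof -
  define g where "g y = (f (c + y) + f (c - y)) / 2 - f c" for y
  have plus_meas: "(\<lambda>y. f (c + y)) \<in> borel_measurable lebesgue"
    and minus_meas: "(\<lambda>y. f (c - y)) \<in> borel_measurable lebesgue"
    using borel_measurable_affine[OF f_meas, of 1 c] borel_measurable_affine[OF f_meas, of "- 1" c] by simp_all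
  have plus_weighted: "integrable lebesgue (\<lambda>y. norm (f (c + y)) / (1 + \<bar>y\<bar>) ^ M)"
    and minus_weighted: "integrable lebesgue (\<lambda>y. norm (f (c - y)) / (1 + \<bar>y\<bar>) ^ M)"
    using weighted_integrable_affine[OF f_meas f_weighted, of 1 c]
      weighted_integrable_affine[OF f_meas f_weighted, of "- 1" c] by simp_all
  have g_meas: "g \<in> borel_measurable lebesgue"
    unfolding g_def using plus_meas minus_meas by measurable
  then have "integrable lebesgue (\<lambda>y. norm (g y) / (1 + \<bar>y\<bar>) ^ M)"
    unfolding g_def using plus_weighted minus_weighted \<open>3 \<le> M\<close>
    by (rule symmetric_deviation_weighted_integrable)
  moreover have "isCont g 0" and "g 0 = 0"
    unfolding isCont_def g_def using tendsto_diff[OF f_sym tendsto_const[of "f c"]] by simp_all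
  ultimately have "(\<lambda>k::nat. \<integral>y. g y * (of_nat k * \<phi> (of_nat k * y)) \<partial>lebesgue) \<longlonglongrightarrow> 0"
    using g_meas \<phi>_cont \<phi>_decr by (intro scaled_kernel_integral_tendsto_zero)
  then have "(\<lambda>k::nat. f c + (\<integral>y. g y * (of_nat k * \<phi> (of_nat k * y)) \<partial>lebesgue)) \<longlonglongrightarrow> f c"
    using tendsto_add[OF tendsto_const[of "f c"]] by fastforce
  moreover have "eventually (\<lambda>k. f c + (\<integral>y. g y * (of_nat k * \<phi> (of_nat k * y)) \<partial>lebesgue)
      = integral UNIV (\<lambda>x. f x * (of_nat k * \<phi> (of_nat k * (x - c))))) sequentially"
  proof (rule eventually_sequentiallyI)
    fix k :: nat assume "1 \<le> k"
    obtain A where decay: "\<And>s. norm (\<phi> s) \<le> A / (1 + \<bar>s\<bar>) ^ M"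
      using \<phi>_decr unfolding rapidly_decreasing_def by blast
    have "integral UNIV (\<lambda>x. f x * (real k * \<phi> (real k * (x - c))))
        = f c + (\<integral>y. g y * (real k * \<phi> (real k * y)) \<partial>lebesgue)"
      unfolding g_def
    proof (rule even_kernel_integral_eq)
      show "integrable lebesgue \<phi>"
        using \<phi>_cont \<phi>_decr by (rule rapidly_decreasing_integrable)
      show "integrable lebesgue (\<lambda>y. f (c + y) * (real k * \<phi> (real k * y)))"
        using plus_meas plus_weighted \<phi>_cont decay \<open>1 \<le> k\<close> by (intro scaled_kernel_integrable) auto
      show "integrable lebesgue (\<lambda>y. f (c - y) * (real k * \<phi> (real k * y)))"
        using minus_meas minus_weighted \<phi>_cont decay \<open>1 \<le> k\<close> by (intro scaled_kernel_integrable) auto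
    qed (use even \<phi>_one \<open>1 \<le> k\<close> in auto)
    then show "f c + (\<integral>y. g y * (of_nat k * \<phi> (of_nat k * y)) \<partial>lebesgue)
        = integral UNIV (\<lambda>x. f x * (of_nat k * \<phi> (of_nat k * (x - c))))"
      by simp
  qed
  ultimately show ?thesis
    by (rule Lim_transform_eventually)
qed

theorem theorem6p1:
  fixes \<phi> f :: "real \<Rightarrow> complex" and c :: real
  assumes "\<phi> \<in> schwartz"
    and "\<And>x. \<phi> (- x) = \<phi> x"
    and "integral UNIV \<phi> = 1"
    and "f \<in> SG"
  shows "(\<lambda>k::nat. integral UNIV (\<lambda>x. f x * (of_nat k * \<phi> (of_nat k * (x - c)))))
           \<longlonglongrightarrow> f c"
proof -
  have f_PC: "f \<in> PC_bj" and f_pc: "piecewise_continuous f"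
    using assms(4) unfolding SG_def PC_bj_def by auto
  obtain N where f_weighted: "\<And>M. N \<le> M \<Longrightarrow> integrable lebesgue (\<lambda>x. norm (f x) / (1 + \<bar>x\<bar>) ^ M)"
    using SG_weighted_integrable[OF assms(4)] by blast
  have \<phi>_cont: "continuous_on UNIV \<phi>" and \<phi>_decr: "rapidly_decreasing \<phi>"
    using assms(1) by (rule schwartz_continuous, rule schwartz_rapidly_decreasing)
  have "(\<integral>x. \<phi> x \<partial>lebesgue) = 1"
    using integral_lebesgue[OF rapidly_decreasing_integrable[OF \<phi>_cont \<phi>_decr]] assms(3) by simp
  with f_weighted[of "N + 3"] show ?thesis
    by (intro even_kernel_approximate_identity[where M = "N + 3"] piecewise_continuous_measurable
        PC_bj_symmetric_mean_tendsto f_pc f_PC \<phi>_cont \<phi>_decr assms(2)) auto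
qed

end
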